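(* If $G$ is an appended $3$-star of order $n$, maximum degree $\Delta=3$ and diameter at most $6$, then $\gamma^{\rm ID}(G)=\frac23 n+\frac13$.
   Context: An identifying code of a graph $G$ is a set $C\subseteq V(G)$ such that every vertex $v$ has $N[v]\cap C\neq\emptyset$ and for all distinct $u,v$, $N[u]\cap C \ne N[v]\cap C$, where $N[v]$ is the closed neighborhood; $\gamma^{\rm ID}(G)$ is its minimum size. A 3-star is $K_{1,3}$. For a graph $G'$, a vertex $v$ of $G'$ and a star $S$, $G'\rhd_v S$ is the graph obtained from the disjoint union of $G'$ and $S$ by identifying $v$ with a leaf of $S$. An appended 3-star is a graph $G_p$ ($p\ge 0$) where $G_0$ is a 3-star and $G_i=G_{i-1}\rhd_{v_{i-1}}S_i$ for $i=1,\dots,p$, with each $S_i$ a 3-star and $v_{i-1}$ a vertex of $G_{i-1}$. *)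

theory Defs
  imports Complex_Main
begin

text \<open>Finite simple graphs given by a vertex set V and an edge set E of
two-element subsets of V.\<close>

definition adj :: "'a set set \<Rightarrow> 'a \<Rightarrow> 'a \<Rightarrow> bool" where
  "adj E u v \<longleftrightarrow> {u, v} \<in> E"

definition closed_nbhd :: "'a set \<Rightarrow> 'a set set \<Rightarrow> 'a \<Rightarrow> 'a set" where
  "closed_nbhd V E v = insert v {u \<in> V. adj E u v}"

definition degree :: "'a set \<Rightarrow> 'a set set \<Rightarrow> 'a \<Rightarrow> nat" where
  "degree V E v = card {u \<in> V. adj E u v}"

definition max_degree :: "'a set \<Rightarrow> 'a set set \<Rightarrow> nat" where
  "max_degree V E = Max (degree V E ` V)"

text \<open>A walk is a nonempty list of vertices, consecutive ones adjacent;
its length is the number of edges traversed.\<close>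

definition is_walk :: "'a set \<Rightarrow> 'a set set \<Rightarrow> 'a list \<Rightarrow> bool" where
  "is_walk V E xs \<longleftrightarrow> xs \<noteq> [] \<and> set xs \<subseteq> V \<and>
     (\<forall>i. Suc i < length xs \<longrightarrow> adj E (xs ! i) (xs ! Suc i))"

definition dist :: "'a set \<Rightarrow> 'a set set \<Rightarrow> 'a \<Rightarrow> 'a \<Rightarrow> nat" where
  "dist V E u v = (LEAST k. \<exists>xs. is_walk V E xs \<and> hd xs = u \<and> last xs = v \<and> length xs = Suc k)"

definition diameter :: "'a set \<Rightarrow> 'a set set \<Rightarrow> nat" where
  "diameter V E = Max {dist V E u v | u v. u \<in> V \<and> v \<in> V}"

definition is_identifying_code :: "'a set \<Rightarrow> 'a set set \<Rightarrow> 'a set \<Rightarrow> bool" where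
  "is_identifying_code V E C \<longleftrightarrow> C \<subseteq> V \<and>
     (\<forall>v\<in>V. closed_nbhd V E v \<inter> C \<noteq> {}) \<and>
     (\<forall>u\<in>V. \<forall>v\<in>V. u \<noteq> v \<longrightarrow> closed_nbhd V E u \<inter> C \<noteq> closed_nbhd V E v \<inter> C)"

definition gamma_ID :: "'a set \<Rightarrow> 'a set set \<Rightarrow> nat" where
  "gamma_ID V E = (LEAST k. \<exists>C. is_identifying_code V E C \<and> card C = k)"

text \<open>Appended 3-stars (up to relabelling): G_0 is a 3-star K_{1,3};
G_i arises from G_{i-1} by attaching a new 3-star whose leaf is identified
with a vertex v of G_{i-1}, i.e. adding a fresh centre c adjacent to v and
to two further fresh leaves x, y.\<close>

inductive appended_3star :: "'a set \<Rightarrow> 'a set set \<Rightarrow> bool" where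
  base: "distinct [c, a, b, d] \<Longrightarrow>
         appended_3star {c, a, b, d} {{c, a}, {c, b}, {c, d}}"
| step: "appended_3star V E \<Longrightarrow> v \<in> V \<Longrightarrow> distinct [c, x, y] \<Longrightarrow>
         c \<notin> V \<Longrightarrow> x \<notin> V \<Longrightarrow> y \<notin> V \<Longrightarrow>
         appended_3star (V \<union> {c, x, y}) (E \<union> {{c, v}, {c, x}, {c, y}})"

end

theory Submission
  imports Defs
begin

text \<open>An appended 3-star is a tree. If its maximum degree is 3, no star is attached at a
  centre, so every edge joins one of the k centres, each of degree 3, to one of the 2k + 1 other
  vertices, and n = 3k + 1. The non-centres form an identifying code: each identifies itself, and
  each centre is identified by its three neighbours, which no other centre shares since a tree has
  no 4-cycle. Conversely, diameter at most 6 forces a hub, a centre adjacent to every non-centre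
  of degree at least 2, as otherwise the tree contains a path with 7 edges. For an identifying
  code C, sending each non-centre outside C to a non-hub centre of C next to it, or to the hub if
  there is none, is injective into the centres in C; so C is at least as large as the set of
  non-centres.\<close>

lemma adj_commute: "adj E a b = adj E b a"
  by (simp add: insert_commute adj_def)

definition simple_graph :: "'a set \<Rightarrow> 'a set set \<Rightarrow> bool" where
  "simple_graph V E \<longleftrightarrow> (\<forall>e\<in>E. \<exists>a b. e = {a, b} \<and> a \<in> V \<and> b \<in> V \<and> a \<noteq> b)"

lemma simple_graph_adjD:
  assumes "simple_graph V E" "adj E a b"
  shows "a \<in> V" "b \<in> V" "a \<noteq> b"
  using assms unfolding simple_graph_def adj_def by (fastforce simp: doubleton_eq_iff)+

definition graph_connected :: "'a set \<Rightarrow> 'a set set \<Rightarrow> bool" where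
  "graph_connected V E \<longleftrightarrow>
     (\<forall>u\<in>V. \<forall>w\<in>V. \<exists>xs. is_walk V E xs \<and> hd xs = u \<and> last xs = w)"

lemma degree_le_max_degree: "finite V \<Longrightarrow> w \<in> V \<Longrightarrow> degree V E w \<le> max_degree V E"
  unfolding max_degree_def by simp

lemma gamma_ID_eqI:
  assumes "is_identifying_code V E C"
    and "\<And>C'. is_identifying_code V E C' \<Longrightarrow> card C \<le> card C'"
  shows "gamma_ID V E = card C"
  unfolding gamma_ID_def using assms by (intro Least_equality) auto

subsection \<open>Walks\<close>

lemma is_walk_iff_successively:
  "is_walk V E xs \<longleftrightarrow> xs \<noteq> [] \<and> set xs \<subseteq> V \<and> successively (adj E) xs"
  unfolding is_walk_def successively_conv_nth ..

lemma is_walk_Nil [simp]: "\<not> is_walk V E []"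
  and is_walk_singleton [simp]: "is_walk V E [a] \<longleftrightarrow> a \<in> V"
  and is_walk_Cons_Cons [simp]:
    "is_walk V E (a # b # xs) \<longleftrightarrow> a \<in> V \<and> adj E a b \<and> is_walk V E (b # xs)"
  by (auto simp: is_walk_iff_successively)

lemma is_walk_rev [simp]: "is_walk V E (rev xs) \<longleftrightarrow> is_walk V E xs"
  by (simp add: is_walk_iff_successively adj_commute)

lemma is_walk_append:
  assumes "is_walk V E xs" "is_walk V E ys" "last xs = hd ys"
  shows "is_walk V E (xs @ tl ys)"
  using assms
  by (cases ys) (auto simp: is_walk_iff_successively successively_append_iff successively_Cons)

lemma is_walk_prefix: "is_walk V E (xs @ ys) \<Longrightarrow> xs \<noteq> [] \<Longrightarrow> is_walk V E xs"
  by (auto simp: is_walk_iff_successively successively_append_iff)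

lemma is_walk_mono: "is_walk V E xs \<Longrightarrow> V \<subseteq> V' \<Longrightarrow> E \<subseteq> E' \<Longrightarrow> is_walk V' E' xs"
  unfolding is_walk_iff_successively adj_def by (auto elim: successively_mono)

lemma last_append_tl: "last xs = hd ys \<Longrightarrow> ys \<noteq> [] \<Longrightarrow> last (xs @ tl ys) = last ys"
  by (cases ys) (auto simp: last_append)

lemma graph_connectedI:
  assumes "r \<in> V" "\<And>z. z \<in> V \<Longrightarrow> \<exists>xs. is_walk V E xs \<and> hd xs = z \<and> last xs = r"
  shows "graph_connected V E"
  unfolding graph_connected_def
proof (intro ballI)
  fix u w assume "u \<in> V" "w \<in> V"
  then obtain xs ys where xs: "is_walk V E xs" "hd xs = u" "last xs = r"
    and ys: "is_walk V E ys" "hd ys = w" "last ys = r"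
    using assms(2) by meson
  have ne: "xs \<noteq> []" "rev ys \<noteq> []" using xs(1) ys(1) by auto
  have "is_walk V E (xs @ tl (rev ys))"
    using is_walk_append[of V E xs "rev ys"] xs ys ne by (simp add: hd_rev)
  moreover have "hd (xs @ tl (rev ys)) = u" "last (xs @ tl (rev ys)) = w"
    using xs ys ne last_append_tl[of xs "rev ys"] by (simp_all add: hd_rev last_rev)
  ultimately show "\<exists>zs. is_walk V E zs \<and> hd zs = u \<and> last zs = w" by blast
qed

subsection \<open>Distance\<close>

lemma dist_le_walk: "is_walk V E xs \<Longrightarrow> dist V E (hd xs) (last xs) \<le> length xs - 1"
  unfolding dist_def by (rule Least_le) (cases xs; auto)

lemma dist_le_diameter:
  assumes "finite V" "u \<in> V" "w \<in> V"
  shows "dist V E u w \<le> diameter V E"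
proof -
  have "{dist V E u v | u v. u \<in> V \<and> v \<in> V} = (\<lambda>(u, v). dist V E u v) ` (V \<times> V)" by auto
  then have "finite {dist V E u v | u v. u \<in> V \<and> v \<in> V}" using assms(1) by simp
  then show ?thesis unfolding diameter_def using assms(2,3) by (intro Max_ge) auto
qed

lemma shortest_walk_exists:
  assumes "is_walk V E xs"
  obtains ys where "is_walk V E ys" "hd ys = hd xs" "last ys = last xs"
    "length ys = Suc (dist V E (hd xs) (last xs))"
proof -
  have "\<exists>k ys. is_walk V E ys \<and> hd ys = hd xs \<and> last ys = last xs \<and> length ys = Suc k"
    using assms by (intro exI[of _ "length xs - 1"] exI[of _ xs]) (cases xs; auto)
  from LeastI_ex[OF this] show ?thesis using that unfolding dist_def by blast
qed

fun non_backtracking :: "'a list \<Rightarrow> bool" where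
  "non_backtracking (a # b # c # xs) \<longleftrightarrow> a \<noteq> c \<and> non_backtracking (b # c # xs)"
| "non_backtracking _ \<longleftrightarrow> True"

lemma not_non_backtracking_decomp:
  "\<not> non_backtracking xs \<Longrightarrow> \<exists>as a b bs. xs = as @ a # b # a # bs"
proof (induction xs rule: non_backtracking.induct)
  case (1 a b c xs)
  then show ?case by (metis append_Cons append_Nil non_backtracking.simps(1))
qed simp_all

lemma shortest_walk_non_backtracking:
  assumes walk: "is_walk V E xs" and shortest: "length xs = Suc (dist V E (hd xs) (last xs))"
  shows "non_backtracking xs"
proof (rule ccontr)
  assume "\<not> non_backtracking xs"
  then obtain as a b bs where xs: "xs = as @ a # b # a # bs"
    using not_non_backtracking_decomp by blast
  let ?ys = "as @ a # bs"
  have "is_walk V E ?ys" "hd ?ys = hd xs" "last ?ys = last xs"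
    using walk unfolding xs by (auto simp: is_walk_iff_successively successively_append_iff
        hd_append last_append split: if_splits)
  then have "dist V E (hd xs) (last xs) \<le> length ?ys - 1" using dist_le_walk by metis
  then show False using shortest unfolding xs by simp
qed

subsection \<open>Forests\<close>

text \<open>The edge from a to b is a bridge iff some vertex set S contains a but not b and is left
  by no other edge; a graph all of whose edges are bridges is a forest.\<close>

definition bridge_cut :: "'a set set \<Rightarrow> 'a \<Rightarrow> 'a \<Rightarrow> 'a set \<Rightarrow> bool" where
  "bridge_cut E a b S \<longleftrightarrow>
     a \<in> S \<and> b \<notin> S \<and> (\<forall>x y. {x, y} \<in> E \<longrightarrow> x \<in> S \<longrightarrow> y \<notin> S \<longrightarrow> x = a \<and> y = b)"

definition every_edge_bridge :: "'a set set \<Rightarrow> bool" where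
  "every_edge_bridge E \<longleftrightarrow> (\<forall>a b. {a, b} \<in> E \<longrightarrow> (\<exists>S. bridge_cut E a b S))"

lemma bridge_cut_complement: "bridge_cut E a b S \<Longrightarrow> bridge_cut E b a (- S)"
  unfolding bridge_cut_def by (metis ComplD ComplI insert_commute)

lemma every_edge_bridgeD:
  assumes "every_edge_bridge E" "adj E a b"
  obtains S where "bridge_cut E a b S"
  using assms unfolding every_edge_bridge_def adj_def by blast

lemma list_leaves_set:
  assumes "xs \<noteq> []" "hd xs \<in> S" "last xs \<notin> S"
  shows "\<exists>us p q ws. xs = us @ p # q # ws \<and> p \<in> S \<and> q \<notin> S"
  using assms
proof (induction xs)
  case (Cons x xs)
  show ?case
  proof (cases "hd xs \<in> S")
    case True
    with Cons obtain us p q ws where "xs = us @ p # q # ws" "p \<in> S" "q \<notin> S"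
      by (cases xs) auto
    then show ?thesis by (metis append_Cons)
  next
    case False
    with Cons show ?thesis by (cases xs) (auto intro: exI[of _ "[]"])
  qed
qed simp

lemma walk_crosses_bridge_cut:
  assumes "bridge_cut E a b S" "is_walk V E xs" "hd xs \<in> S" "last xs \<notin> S"
  shows "\<exists>us ws. xs = us @ a # b # ws"
proof -
  obtain us p q ws where xs: "xs = us @ p # q # ws" "p \<in> S" "q \<notin> S"
    using list_leaves_set[of xs S] assms(2-4) by (cases "xs = []") auto
  then have "adj E p q"
    using assms(2) by (simp add: is_walk_iff_successively successively_append_iff)
  then have "p = a" "q = b" using assms(1) xs(2,3) unfolding bridge_cut_def adj_def by blast+
  then show ?thesis using xs(1) by blast
qed

lemma non_backtracking_walk_distinct:
  assumes "simple_graph V E" "every_edge_bridge E" "is_walk V E xs" "non_backtracking xs"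
  shows "distinct xs"
  using assms(3,4)
proof (induction xs rule: non_backtracking.induct)
  case (1 x y z zs)
  have IH: "distinct (y # z # zs)" using 1 by simp
  have "x \<notin> set (y # z # zs)"
  proof
    assume "x \<in> set (y # z # zs)"
    moreover have xy: "adj E x y" using "1.prems" by simp
    ultimately have "x \<in> set (z # zs)" using simple_graph_adjD(3)[OF assms(1)] by auto
    then obtain as bs where split: "z # zs = as @ x # bs" by (meson split_list)
    obtain S where S: "bridge_cut E y x S"
      using every_edge_bridgeD[OF assms(2)] xy adj_commute by metis
    have "is_walk V E (y # z # zs)" using "1.prems" by simp
    then have "is_walk V E (y # as @ [x])"
      using is_walk_prefix[of V E "y # as @ [x]" bs] split by simp
    moreover have "y \<in> S" "x \<notin> S" using S unfolding bridge_cut_def by auto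
    \<comment> \<open>the walk from y back to x must cross the bridge, and by distinctness it does so at once\<close>
    ultimately obtain us ws where "y # as @ [x] = us @ y # x # ws"
      using walk_crosses_bridge_cut[OF S] by fastforce
    moreover have "distinct (y # as @ [x])" using IH split by auto
    ultimately have "as = []"
      by (cases us) (auto simp: Cons_eq_append_conv append_eq_Cons_conv)
    then show False using "1.prems"(2) split by auto
  qed
  then show ?case using IH by simp
qed (auto dest: simple_graph_adjD[OF assms(1)])

lemma in_set_zip_tl: "(p, q) \<in> set (zip xs (tl xs)) \<longleftrightarrow> (\<exists>us ws. xs = us @ p # q # ws)"
proof (induction xs)
  case (Cons x xs)
  then show ?case
    by (cases xs) (auto simp: Cons_eq_append_conv intro: exI[of _ "[]"] exI[of _ "x # _"])
qed simp

text \<open>Each step p q of a path is a bridge whose cut contains the start of the path but not its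
  end, so every walk between the same ends takes that step too.\<close>

lemma distinct_walk_steps:
  assumes forest: "every_edge_bridge E" and xs: "is_walk V E xs" "distinct xs"
    and ys: "is_walk V E ys" "hd ys = hd xs" "last ys = last xs"
  shows "set (zip xs (tl xs)) \<subseteq> set (zip ys (tl ys))"
proof clarify
  fix p q assume "(p, q) \<in> set (zip xs (tl xs))"
  then obtain as bs where split: "xs = as @ p # q # bs" by (auto simp: in_set_zip_tl)
  have "adj E p q"
    using xs(1) by (simp add: split is_walk_iff_successively successively_append_iff)
  then obtain S where S: "bridge_cut E p q S" using every_edge_bridgeD[OF forest] by blast
  then have pq: "p \<in> S" "q \<notin> S" unfolding bridge_cut_def by auto
  have "hd xs \<in> S"
  proof (rule ccontr)
    assume out: "hd xs \<notin> S"
    then have "as \<noteq> []" using split pq by auto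
    have "is_walk V E (p # rev as)"
      using is_walk_prefix[of V E "as @ [p]" "q # bs"] xs(1) split is_walk_rev by fastforce
    moreover have "last (p # rev as) \<notin> S" using out split \<open>as \<noteq> []\<close> by (simp add: last_rev)
    ultimately have "q \<in> set (p # rev as)" using walk_crosses_bridge_cut[OF S] pq by fastforce
    then show False using xs(2) split by auto
  qed
  moreover have "last xs \<notin> S"
  proof
    assume in_S: "last xs \<in> S"
    then have "bs \<noteq> []" using split pq by auto
    have "is_walk V E (rev bs @ [q])"
      using xs(1) split is_walk_rev[of V E "q # bs"]
      by (simp add: is_walk_iff_successively successively_append_iff)
    moreover have "hd (rev bs @ [q]) \<in> S" using in_S split \<open>bs \<noteq> []\<close> by (simp add: hd_rev)
    ultimately have "p \<in> set (rev bs @ [q])" using walk_crosses_bridge_cut[OF S] pq by fastforce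
    then show False using xs(2) split by auto
  qed
  ultimately show "(p, q) \<in> set (zip ys (tl ys))"
    using walk_crosses_bridge_cut[OF S ys(1)] ys(2,3) by (simp add: in_set_zip_tl)
qed

lemma distinct_walk_shortest:
  assumes "every_edge_bridge E" "is_walk V E xs" "distinct xs"
    and "is_walk V E ys" "hd ys = hd xs" "last ys = last xs"
  shows "length xs \<le> length ys"
proof -
  have "length xs - 1 = card (set (zip xs (tl xs)))"
    using assms(3) by (simp add: distinct_card distinct_zipI1)
  also have "\<dots> \<le> card (set (zip ys (tl ys)))"
    using distinct_walk_steps[OF assms] by (simp add: card_mono)
  also have "\<dots> \<le> length ys - 1" using card_length[of "zip ys (tl ys)"] by simp
  finally show ?thesis using assms(2,4) by (cases xs; cases ys) auto
qed

lemma dist_distinct_walk: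
  assumes "every_edge_bridge E" "is_walk V E xs" "distinct xs"
  shows "dist V E (hd xs) (last xs) = length xs - 1"
proof -
  obtain ys where ys: "is_walk V E ys" "hd ys = hd xs" "last ys = last xs"
    "length ys = Suc (dist V E (hd xs) (last xs))"
    using shortest_walk_exists[OF assms(2)] by blast
  show ?thesis
    using distinct_walk_shortest[OF assms ys(1-3)] dist_le_walk[OF assms(2)] ys(4) by simp
qed

subsection \<open>Appended 3-stars\<close>

lemma appended_3star_finite: "appended_3star V E \<Longrightarrow> finite V"
  by (induction rule: appended_3star.induct) auto

lemma appended_3star_simple: "appended_3star V E \<Longrightarrow> simple_graph V E"
  by (induction rule: appended_3star.induct) (auto simp: simple_graph_def, blast+)

lemma appended_3star_connected: "appended_3star V E \<Longrightarrow> graph_connected V E"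
proof (induction rule: appended_3star.induct)
  case (base c a b d)
  show ?case
    by (rule graph_connectedI[of c])
      (auto intro: exI[of _ "[c]"] exI[of _ "[_, c]"] simp: adj_def)
next
  case (step V E v c x y)
  let ?V = "V \<union> {c, x, y}" and ?E = "E \<union> {{c, v}, {c, x}, {c, y}}"
  show ?case
  proof (rule graph_connectedI[of v])
    fix z assume "z \<in> ?V"
    then consider "z \<in> V" | "z = c" | "z = x" | "z = y" by blast
    then show "\<exists>xs. is_walk ?V ?E xs \<and> hd xs = z \<and> last xs = v"
    proof cases
      case 1
      then obtain xs where "is_walk V E xs" "hd xs = z" "last xs = v"
        using step.IH step.hyps(2) unfolding graph_connected_def by blast
      then show ?thesis by (blast intro: is_walk_mono)
    qed (use step.hyps(2) in \<open>auto intro: exI[of _ "[_, c, v]"] exI[of _ "[c, v]"] simp: adj_def\<close>)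
  qed (use step.hyps(2) in simp)
qed

lemma every_edge_bridge_attach_star:
  assumes simple: "simple_graph V E" and forest: "every_edge_bridge E" and v: "v \<in> V"
    and new: "distinct [c, x, y]" "c \<notin> V" "x \<notin> V" "y \<notin> V"
  shows "every_edge_bridge (E \<union> {{c, v}, {c, x}, {c, y}})"
proof -
  let ?E = "E \<union> {{c, v}, {c, x}, {c, y}}"
  have old_vertices: "p \<in> V" "q \<in> V" if "{p, q} \<in> E" for p q
    using simple_graph_adjD[OF simple] that unfolding adj_def by blast+
  have old_edge: "\<exists>S. bridge_cut ?E a b S" if ab: "{a, b} \<in> E" for a b
  proof -
    obtain S where S: "bridge_cut E a b S"
      using forest ab unfolding every_edge_bridge_def by blast
    define S' where "S' = (if v \<in> S then S \<union> {c, x, y} else S - {c, x, y})"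
    have "bridge_cut ?E a b S'"
      using S old_vertices[OF ab] old_vertices new v
      unfolding bridge_cut_def S'_def by (auto simp: doubleton_eq_iff)
    then show ?thesis by blast
  qed
  have new_edge: "\<exists>S. bridge_cut ?E z c S" if "z \<in> {v, x, y}" for z
  proof -
    have "bridge_cut ?E z c (if z = v then V else {z})"
      using that old_vertices new v unfolding bridge_cut_def by (auto simp: doubleton_eq_iff)
    then show ?thesis by blast
  qed
  show ?thesis
    unfolding every_edge_bridge_def
  proof (intro allI impI)
    fix a b assume "{a, b} \<in> ?E"
    then consider "{a, b} \<in> E" | z where "z \<in> {v, x, y}" "a = z" "b = c"
      | z where "z \<in> {v, x, y}" "a = c" "b = z"
      by (auto simp: doubleton_eq_iff)
    then show "\<exists>S. bridge_cut ?E a b S"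
    proof cases
      case 1
      then show ?thesis by (rule old_edge)
    next
      case 2
      then show ?thesis using new_edge by blast
    next
      case (3 z)
      then obtain S where "bridge_cut ?E z c S" using new_edge by blast
      then have "bridge_cut ?E c z (- S)" by (rule bridge_cut_complement)
      then show ?thesis using 3 by blast
    qed
  qed
qed

lemma appended_3star_every_edge_bridge: "appended_3star V E \<Longrightarrow> every_edge_bridge E"
proof (induction rule: appended_3star.induct)
  case (base c a b d)
  have "bridge_cut {{c, a}, {c, b}, {c, d}} z c {z}" if "z \<in> {a, b, d}" for z
    using base that unfolding bridge_cut_def by (auto simp: doubleton_eq_iff)
  then show ?case
    unfolding every_edge_bridge_def by (auto simp: doubleton_eq_iff dest: bridge_cut_complement)
next
  case (step V E v c x y)
  then show ?case by (intro every_edge_bridge_attach_star appended_3star_simple)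
qed

lemma degree_attach_star:
  assumes "finite V" "simple_graph V E" "v \<in> V"
    and "distinct [c, x, y]" "c \<notin> V" "x \<notin> V" "y \<notin> V"
  shows "w \<in> V \<Longrightarrow> degree (V \<union> {c, x, y}) (E \<union> {{c, v}, {c, x}, {c, y}}) w
           = degree V E w + (if w = v then 1 else 0)"
    and "degree (V \<union> {c, x, y}) (E \<union> {{c, v}, {c, x}, {c, y}}) c = 3"
proof -
  let ?V = "V \<union> {c, x, y}" and ?E = "E \<union> {{c, v}, {c, x}, {c, y}}"
  assume w: "w \<in> V"
  have "{u \<in> ?V. adj ?E u w} = {u \<in> V. adj E u w} \<union> (if w = v then {c} else {})"
    using assms w simple_graph_adjD[OF assms(2)] unfolding adj_def
    by (auto simp: doubleton_eq_iff)
  then show "degree ?V ?E w = degree V E w + (if w = v then 1 else 0)"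
    using assms(1,5) unfolding degree_def by auto
next
  let ?V = "V \<union> {c, x, y}" and ?E = "E \<union> {{c, v}, {c, x}, {c, y}}"
  have "{u \<in> ?V. adj ?E u c} = {v, x, y}"
    using assms simple_graph_adjD[OF assms(2)] unfolding adj_def by (auto simp: doubleton_eq_iff)
  moreover have "v \<noteq> x" "v \<noteq> y" using assms(3,6,7) by auto
  ultimately show "degree ?V ?E c = 3" using assms(4) unfolding degree_def by simp
qed

lemma appended_3star_centres:
  assumes "appended_3star V E" "\<forall>w\<in>V. degree V E w \<le> 3"
  shows "\<exists>K\<subseteq>V. K \<noteq> {} \<and> card V = 3 * card K + 1
           \<and> (\<forall>a b. adj E a b \<longrightarrow> (a \<in> K \<longleftrightarrow> b \<notin> K)) \<and> (\<forall>c\<in>K. degree V E c = 3)"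
  using assms
proof (induction rule: appended_3star.induct)
  case (base c a b d)
  have "{u \<in> {c, a, b, d}. adj {{c, a}, {c, b}, {c, d}} u c} = {a, b, d}"
    using base unfolding adj_def by (auto simp: doubleton_eq_iff)
  then have "degree {c, a, b, d} {{c, a}, {c, b}, {c, d}} c = 3"
    using base unfolding degree_def by simp
  then show ?case
    using base by (intro exI[of _ "{c}"]) (auto simp: adj_def doubleton_eq_iff)
next
  case (step V E v c x y)
  let ?V = "V \<union> {c, x, y}" and ?E = "E \<union> {{c, v}, {c, x}, {c, y}}"
  note degree_new = degree_attach_star[OF appended_3star_finite[OF step.hyps(1)]
      appended_3star_simple[OF step.hyps(1)] step.hyps(2-6)]
  have "degree V E w \<le> 3" if "w \<in> V" for w
    using step.prems that degree_new(1)[OF that] by fastforce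
  then obtain K where K: "K \<subseteq> V" "K \<noteq> {}" "card V = 3 * card K + 1"
    "\<forall>a b. adj E a b \<longrightarrow> (a \<in> K \<longleftrightarrow> b \<notin> K)" "\<forall>c\<in>K. degree V E c = 3"
    using step.IH by blast
  have "degree V E v \<le> 2"
    using step.prems step.hyps(2) degree_new(1)[OF step.hyps(2)] by fastforce
  then have "v \<notin> K" using K(5) by fastforce
  have fin: "finite V" "finite K"
    using appended_3star_finite[OF step.hyps(1)] K(1) finite_subset by auto
  have "c \<notin> K" using K(1) step.hyps(4) by blast
  have "card ?V = 3 * card (insert c K) + 1"
    using K(3) fin \<open>c \<notin> K\<close> step.hyps(3-6) by (auto simp: card_Un_disjoint)
  moreover have "\<forall>a b. adj ?E a b \<longrightarrow> (a \<in> insert c K \<longleftrightarrow> b \<notin> insert c K)"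
    using K(1,4) \<open>v \<notin> K\<close> step.hyps(2-6)
      simple_graph_adjD[OF appended_3star_simple[OF step.hyps(1)]]
    unfolding adj_def by (auto simp: doubleton_eq_iff)
  moreover have "\<forall>k\<in>insert c K. degree ?V ?E k = 3"
    using K(1,5) \<open>v \<notin> K\<close> degree_new by auto
  ultimately show ?case using K(1) step.hyps(2) by (intro exI[of _ "insert c K"]) auto
qed

subsection \<open>Trees of stars\<close>

text \<open>K stands for the set of centres of the appended stars.\<close>

locale centred_tree =
  fixes V :: "'a set" and E :: "'a set set" and K :: "'a set"
  assumes finite_vertices: "finite V"
    and simple: "simple_graph V E"
    and forest: "every_edge_bridge E"
    and connected: "graph_connected V E"
    and centres_subset: "K \<subseteq> V"
    and centres_nonempty: "K \<noteq> {}"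
    and adj_centre_iff: "adj E a b \<Longrightarrow> a \<in> K \<longleftrightarrow> b \<notin> K"
    and degree_centre: "c \<in> K \<Longrightarrow> degree V E c = 3"
begin

lemmas adj_vertices = simple_graph_adjD[OF simple]

lemma common_neighbour_unique:
  assumes "adj E p a" "adj E p b" "adj E q a" "adj E q b" "a \<noteq> b"
  shows "p = q"
proof (rule ccontr)
  assume "p \<noteq> q"
  have "adj E a p" "adj E b q" using assms(1,4) adj_commute by metis+
  then have "is_walk V E [a, p, b, q, a]" "non_backtracking [a, p, b, q, a]"
    using assms \<open>p \<noteq> q\<close> adj_vertices(1) by auto
  then have "distinct [a, p, b, q, a]" by (rule non_backtracking_walk_distinct[OF simple forest])
  then show False by simp
qed

lemma centre_neighbours_eq:
  assumes "c \<in> K" "adj E u c" "adj E w c" "adj E y c" "u \<noteq> w" "u \<noteq> y" "w \<noteq> y"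
  shows "{a \<in> V. adj E a c} = {u, w, y}"
proof -
  have "{u, w, y} \<subseteq> {a \<in> V. adj E a c}" using assms(2-4) adj_vertices by auto
  moreover have "card {a \<in> V. adj E a c} = card {u, w, y}"
    using assms degree_centre unfolding degree_def by simp
  moreover have "finite {a \<in> V. adj E a c}" using finite_vertices by simp
  ultimately show ?thesis using card_subset_eq by metis
qed

lemma centre_third_neighbour:
  assumes "c \<in> K" obtains z where "adj E z c" "z \<noteq> p" "z \<noteq> q"
proof -
  have "\<not> {u \<in> V. adj E u c} \<subseteq> {p, q}"
  proof
    assume "{u \<in> V. adj E u c} \<subseteq> {p, q}"
    then have "card {u \<in> V. adj E u c} \<le> card {p, q}" by (simp add: card_mono)
    also have "\<dots> \<le> 2" by (simp add: card_insert_if)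
    finally show False using assms degree_centre unfolding degree_def by simp
  qed
  then show ?thesis using that by blast
qed

lemma closed_nbhd_noncentre_inter: "u \<in> V - K \<Longrightarrow> closed_nbhd V E u \<inter> (V - K) = {u}"
  using adj_centre_iff unfolding closed_nbhd_def by blast

lemma closed_nbhd_centre_inter:
  "c \<in> K \<Longrightarrow> closed_nbhd V E c \<inter> (V - K) = {a \<in> V. adj E a c}"
  using adj_centre_iff unfolding closed_nbhd_def by blast

lemma card_closed_nbhd_centre_inter: "c \<in> K \<Longrightarrow> card (closed_nbhd V E c \<inter> (V - K)) = 3"
  using closed_nbhd_centre_inter degree_centre unfolding degree_def by simp

lemma centre_neighbours_inj:
  assumes "c \<in> K" "c' \<in> K" "{a \<in> V. adj E a c} = {a \<in> V. adj E a c'}"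
  shows "c = c'"
proof -
  obtain p where p: "adj E p c" using centre_third_neighbour[OF assms(1)] by blast
  obtain q where q: "adj E q c" "q \<noteq> p" using centre_third_neighbour[OF assms(1)] by blast
  have "adj E p c'" "adj E q c'" using p q assms(3) adj_vertices by blast+
  then show ?thesis using common_neighbour_unique[OF p _ q(1)] q(2) by blast
qed

lemma identifying_code_noncentres: "is_identifying_code V E (V - K)"
  unfolding is_identifying_code_def
proof (intro conjI ballI impI Diff_subset)
  fix v assume "v \<in> V"
  show "closed_nbhd V E v \<inter> (V - K) \<noteq> {}"
  proof (cases "v \<in> K")
    case True
    then have "card (closed_nbhd V E v \<inter> (V - K)) = 3" by (rule card_closed_nbhd_centre_inter)
    then show ?thesis by auto
  next
    case False
    then show ?thesis using closed_nbhd_noncentre_inter \<open>v \<in> V\<close> by simp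
  qed
next
  fix u w assume "u \<in> V" "w \<in> V" "u \<noteq> w"
  then consider "u \<in> K" "w \<in> K" | "u \<in> V - K" "w \<in> K" | "u \<in> K" "w \<in> V - K"
    | "u \<in> V - K" "w \<in> V - K" by blast
  then show "closed_nbhd V E u \<inter> (V - K) \<noteq> closed_nbhd V E w \<inter> (V - K)"
  proof cases
    case 1
    then show ?thesis using centre_neighbours_inj closed_nbhd_centre_inter \<open>u \<noteq> w\<close> by metis
  next
    case 2
    then have "card (closed_nbhd V E u \<inter> (V - K)) \<noteq> card (closed_nbhd V E w \<inter> (V - K))"
      using closed_nbhd_noncentre_inter[of u] card_closed_nbhd_centre_inter[of w] by simp
    then show ?thesis by metis
  next
    case 3
    then have "card (closed_nbhd V E u \<inter> (V - K)) \<noteq> card (closed_nbhd V E w \<inter> (V - K))"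
      using closed_nbhd_noncentre_inter[of w] card_closed_nbhd_centre_inter[of u] by simp
    then show ?thesis by metis
  next
    case 4
    then show ?thesis using closed_nbhd_noncentre_inter \<open>u \<noteq> w\<close> by simp
  qed
qed

definition joint :: "'a \<Rightarrow> bool" where
  "joint u \<longleftrightarrow> u \<in> V - K \<and> (\<exists>a b. a \<noteq> b \<and> adj E a u \<and> adj E b u)"

lemma non_joint_closed_nbhd:
  assumes "u \<in> V - K" "\<not> joint u" "adj E c u"
  shows "closed_nbhd V E u = {u, c}"
proof -
  have "{a \<in> V. adj E a u} = {c}" using assms adj_vertices(1) unfolding joint_def by blast
  then show ?thesis unfolding closed_nbhd_def by simp
qed

lemma walk_from_centre_to_far_noncentre:
  assumes "c0 \<in> K" "u \<in> V - K" "\<not> adj E u c0" "is_walk V E xs" "hd xs = c0" "last xs = u"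
  obtains w1 w2 w3 rest where "xs = c0 # w1 # w2 # w3 # rest"
proof -
  consider "xs = [c0]" | a where "xs = [c0, a]" | a b where "xs = [c0, a, b]"
    | w1 w2 w3 rest where "xs = c0 # w1 # w2 # w3 # rest"
    using assms(4,5) by (cases xs; cases "tl xs"; cases "tl (tl xs)"; cases "tl (tl (tl xs))") auto
  then show ?thesis
  proof cases
    case 1
    then show ?thesis using assms by simp
  next
    case 2
    then have "adj E c0 u" using assms(4,6) by simp
    then show ?thesis using assms(3) adj_commute by metis
  next
    case 3
    then show ?thesis using assms adj_centre_iff by auto
  qed (rule that)
qed

lemma walk_to_far_joint:
  assumes c0: "c0 \<in> K" and u: "joint u" "\<not> adj E u c0"
  obtains w1 w2 w3 c2 where "is_walk V E [c0, w1, w2, w3, c2]"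
    "non_backtracking [c0, w1, w2, w3, c2]" "joint w1" "joint w3"
proof -
  have uV: "u \<in> V - K" using u(1) unfolding joint_def by auto
  obtain xs where "is_walk V E xs" "hd xs = c0" "last xs = u"
    using connected c0 centres_subset uV unfolding graph_connected_def by blast
  then obtain xs where xs: "is_walk V E xs" "hd xs = c0" "last xs = u" "non_backtracking xs"
    using shortest_walk_exists shortest_walk_non_backtracking by metis
  then obtain w1 w2 w3 rest where split: "xs = c0 # w1 # w2 # w3 # rest"
    using walk_from_centre_to_far_noncentre c0 uV u(2) by blast
  then have walk: "adj E c0 w1" "adj E w1 w2" "adj E w2 w3" "is_walk V E (w3 # rest)"
    and nb: "c0 \<noteq> w2" "w1 \<noteq> w3" "non_backtracking (w2 # w3 # rest)"
    using xs by auto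
  obtain c2 where c2: "adj E w3 c2" "w2 \<noteq> c2"
  proof (cases rest)
    case Nil
    then have "joint w3" using xs(3) u(1) split by simp
    then obtain a b where "a \<noteq> b" "adj E a w3" "adj E b w3" unfolding joint_def by blast
    then show ?thesis using that adj_commute by metis
  next
    case (Cons c2 rest')
    then show ?thesis using walk(4) nb(3) by (intro that[of c2]) auto
  qed
  have "w1 \<notin> K" "w2 \<in> K" "w3 \<notin> K" using walk c0 adj_centre_iff by blast+
  moreover have "adj E c0 w1" "adj E w2 w1" "adj E w2 w3" "adj E c2 w3"
    using walk c2 adj_commute by metis+
  ultimately have "joint w1" "joint w3"
    using nb(1) c2(2) adj_vertices unfolding joint_def by blast+
  moreover have "is_walk V E [c0, w1, w2, w3, c2]" "non_backtracking [c0, w1, w2, w3, c2]"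
    using walk c2 nb adj_vertices by auto
  ultimately show ?thesis using that by blast
qed

context
  assumes dist_le_6: "\<And>u w. u \<in> V \<Longrightarrow> w \<in> V \<Longrightarrow> dist V E u w \<le> 6"
begin

lemma non_backtracking_walk_length:
  assumes "is_walk V E xs" "non_backtracking xs"
  shows "length xs \<le> 7"
proof -
  have "distinct xs" using non_backtracking_walk_distinct[OF simple forest assms] .
  then have "length xs - 1 = dist V E (hd xs) (last xs)"
    using dist_distinct_walk[OF forest assms(1)] by simp
  also have "\<dots> \<le> 6" using assms(1) by (intro dist_le_6) (auto simp: is_walk_def)
  finally show ?thesis by simp
qed

text \<open>Were u not adjacent to c0, the walk c0 w1 w2 w3 c2 towards u would extend backwards
  through a joint next to c0 other than w1 to a non-backtracking walk with 7 edges.\<close>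

lemma adj_hub_of_two_joints:
  assumes c0: "c0 \<in> K" "u1 \<noteq> u2" "joint u1" "joint u2" "adj E u1 c0" "adj E u2 c0"
    and u: "joint u"
  shows "adj E u c0"
proof (rule ccontr)
  assume "\<not> adj E u c0"
  with c0(1) u obtain w1 w2 w3 c2 where w: "is_walk V E [c0, w1, w2, w3, c2]"
    "non_backtracking [c0, w1, w2, w3, c2]"
    by (rule walk_to_far_joint)
  obtain uj where uj: "joint uj" "adj E uj c0" "uj \<noteq> w1"
    using c0(2-6) by metis
  then obtain c' where c': "adj E c' uj" "c' \<noteq> c0"
    unfolding joint_def by metis
  have "uj \<notin> K" using uj(1) unfolding joint_def by simp
  then have "c' \<in> K" using adj_centre_iff[OF c'(1)] by simp
  then obtain z where z: "adj E z c'" "z \<noteq> uj" using centre_third_neighbour by metis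
  have "is_walk V E [z, c', uj, c0, w1, w2, w3, c2]"
    using w z(1) c'(1) uj(2) adj_vertices(1) by simp
  moreover have "non_backtracking [z, c', uj, c0, w1, w2, w3, c2]"
    using w(2) z(2) c'(2) uj(3) by simp
  ultimately have "length [z, c', uj, c0, w1, w2, w3, c2] \<le> 7"
    by (rule non_backtracking_walk_length)
  then show False by simp
qed

lemma hub_exists: "\<exists>c0\<in>K. \<forall>u. joint u \<longrightarrow> adj E u c0"
proof (cases "\<exists>c\<in>K. \<exists>u1 u2. u1 \<noteq> u2 \<and> joint u1 \<and> joint u2 \<and> adj E u1 c \<and> adj E u2 c")
  case True
  then show ?thesis using adj_hub_of_two_joints by blast
next
  case False
  obtain c0 where c0: "c0 \<in> K" using centres_nonempty by blast
  have "adj E u c0" if u: "joint u" for u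
  proof (rule ccontr)
    assume "\<not> adj E u c0"
    with c0 u obtain w1 w2 w3 c2 where w: "is_walk V E [c0, w1, w2, w3, c2]"
      "non_backtracking [c0, w1, w2, w3, c2]" "joint w1" "joint w3"
      by (rule walk_to_far_joint)
    then have "adj E c0 w1" "adj E w1 w2" "adj E w2 w3" "w1 \<noteq> w3" by auto
    then have "w2 \<in> K" "adj E w1 w2" "adj E w3 w2"
      using c0 adj_centre_iff adj_commute by metis+
    then show False using False w(3,4) \<open>w1 \<noteq> w3\<close> by blast
  qed
  then show ?thesis using c0 by blast
qed

end

end

subsection \<open>The lower bound\<close>

locale hub_code = centred_tree +
  fixes c0 C
  assumes hub_centre: "c0 \<in> K" and joint_adj_hub: "joint u \<Longrightarrow> adj E u c0"
    and code: "is_identifying_code V E C"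
begin

lemma code_dominates: "v \<in> V \<Longrightarrow> closed_nbhd V E v \<inter> C \<noteq> {}"
  and code_separates:
    "u \<in> V \<Longrightarrow> w \<in> V \<Longrightarrow> u \<noteq> w \<Longrightarrow> closed_nbhd V E u \<inter> C \<noteq> closed_nbhd V E w \<inter> C"
  and code_subset: "C \<subseteq> V"
  using code unfolding is_identifying_code_def by simp_all

definition code_centre :: "'a \<Rightarrow> 'a" where
  "code_centre u = (if \<exists>c \<in> C \<inter> K - {c0}. adj E c u
     then SOME c. c \<in> C \<inter> K - {c0} \<and> adj E c u else c0)"

lemma code_centre_cases:
  "code_centre u \<in> C \<inter> K - {c0} \<and> adj E (code_centre u) u
     \<or> code_centre u = c0 \<and> \<not> (\<exists>c \<in> C \<inter> K - {c0}. adj E c u)"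
proof (cases "\<exists>c \<in> C \<inter> K - {c0}. adj E c u")
  case True
  then have "\<exists>c. c \<in> C \<inter> K - {c0} \<and> adj E c u" by blast
  from someI_ex[OF this] show ?thesis unfolding code_centre_def using True by simp
next
  case False
  then show ?thesis unfolding code_centre_def by simp
qed

lemma closed_nbhd_code_hub:
  assumes "u \<in> V - K - C" "\<not> (\<exists>c \<in> C \<inter> K - {c0}. adj E c u)"
  shows "closed_nbhd V E u \<inter> C = {c0}"
proof -
  have "closed_nbhd V E u \<inter> C \<subseteq> {c0}"
  proof
    fix z assume z: "z \<in> closed_nbhd V E u \<inter> C"
    then have "adj E z u" "z \<in> C" using assms(1) unfolding closed_nbhd_def by auto
    moreover have "z \<in> K" using adj_centre_iff[OF \<open>adj E z u\<close>] assms(1) by simp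
    ultimately show "z \<in> {c0}" using assms(2) by blast
  qed
  moreover have "closed_nbhd V E u \<inter> C \<noteq> {}" using code_dominates assms(1) by simp
  ultimately show ?thesis by (meson subset_singletonD)
qed

lemma code_centre_mem:
  assumes "u \<in> V - K - C" shows "code_centre u \<in> C \<inter> K"
proof (cases "code_centre u = c0")
  case True
  then have "closed_nbhd V E u \<inter> C = {c0}"
    using code_centre_cases[of u] closed_nbhd_code_hub[OF assms] by simp
  then show ?thesis using True hub_centre by auto
next
  case False
  then show ?thesis using code_centre_cases[of u] by simp
qed

lemma closed_nbhd_code_far:
  assumes "x \<in> V - K - C" "c \<in> C" "adj E c x" "\<not> adj E x c0"
  shows "closed_nbhd V E x \<inter> C = {c}"
proof -
  have "\<not> joint x" using assms(4) joint_adj_hub by blast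
  then have "closed_nbhd V E x = {x, c}" using non_joint_closed_nbhd assms(1,3) by blast
  then show ?thesis using assms(1,2) by auto
qed

text \<open>The third neighbour z of c must lie in C to separate x from c; but z is no joint, as
  it would close a 4-cycle through y and the hub, so it is not separated from c.\<close>

lemma code_centre_far_near:
  assumes x: "x \<in> V - K - C" "adj E c x" "\<not> adj E x c0"
    and y: "y \<in> V - K - C" "adj E c y" "adj E y c0" "x \<noteq> y"
    and c: "c \<in> C \<inter> K - {c0}"
  shows False
proof -
  obtain z where z: "adj E z c" "z \<noteq> x" "z \<noteq> y" using centre_third_neighbour c by blast
  have "adj E x c" "adj E y c" using x(2) y(2) adj_commute by metis+
  then have "{a \<in> V. adj E a c} = {x, y, z}"
    using centre_neighbours_eq[of c x y z] c z y(4) by auto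
  then have nbhd_c: "closed_nbhd V E c \<inter> C = insert c ({z} \<inter> C)"
    using x(1) y(1) c unfolding closed_nbhd_def by auto
  have "x \<noteq> c" "x \<in> V" "c \<in> V" using c x(1) centres_subset by auto
  then have "closed_nbhd V E x \<inter> C \<noteq> closed_nbhd V E c \<inter> C" by (intro code_separates)
  then have "z \<in> C" using closed_nbhd_code_far[OF x(1) _ x(2,3)] c nbhd_c by auto
  have "z \<in> V - K" using adj_vertices(1)[OF z(1)] adj_centre_iff[OF z(1)] c by simp
  have "\<not> joint z"
  proof
    assume "joint z"
    then have "adj E z c0" by (rule joint_adj_hub)
    moreover have "c0 \<noteq> c" "adj E y c" using c y(2) by (auto simp: adj_commute)
    ultimately show False
      using common_neighbour_unique[of y c0 c z] y(3) z(1,3) by blast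
  qed
  moreover have "adj E c z" using z(1) by (simp add: adj_commute)
  ultimately have "closed_nbhd V E z = {z, c}"
    using non_joint_closed_nbhd \<open>z \<in> V - K\<close> by blast
  then have "closed_nbhd V E z \<inter> C = {z, c}" using \<open>z \<in> C\<close> c by auto
  moreover have "closed_nbhd V E c \<inter> C = {z, c}" using nbhd_c \<open>z \<in> C\<close> by auto
  moreover have "z \<noteq> c" using \<open>z \<in> V - K\<close> c by auto
  ultimately show False using code_separates[of z c] \<open>z \<in> V - K\<close> \<open>c \<in> V\<close> by simp
qed

lemma code_centre_neighbour_unique:
  assumes u: "u \<in> V - K - C" and w: "w \<in> V - K - C" and c: "c \<in> C \<inter> K - {c0}"
    and cu: "adj E c u" and cw: "adj E c w"
  shows "u = w"
proof (rule ccontr)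
  assume "u \<noteq> w"
  consider "adj E u c0" "adj E w c0" | "\<not> adj E u c0" "\<not> adj E w c0"
    | "\<not> adj E u c0" "adj E w c0" | "adj E u c0" "\<not> adj E w c0" by blast
  then show False
  proof cases
    case 1
    moreover have "c0 \<noteq> c" "adj E u c" "adj E w c" using c cu cw by (auto simp: adj_commute)
    ultimately show False using common_neighbour_unique[of u c0 c w] \<open>u \<noteq> w\<close> by blast
  next
    case 2
    then have "closed_nbhd V E u \<inter> C = closed_nbhd V E w \<inter> C"
      using closed_nbhd_code_far[OF u _ cu] closed_nbhd_code_far[OF w _ cw] c by simp
    then show False using code_separates[of u w] u w \<open>u \<noteq> w\<close> by blast
  next
    case 3
    then show False using code_centre_far_near[OF u cu _ w cw _ \<open>u \<noteq> w\<close> c] by blast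
  next
    case 4
    then show False using code_centre_far_near[OF w cw _ u cu _ _ c] \<open>u \<noteq> w\<close> by blast
  qed
qed

lemma code_centre_inj: "inj_on code_centre (V - K - C)"
proof
  fix u w assume u: "u \<in> V - K - C" and w: "w \<in> V - K - C"
    and eq: "code_centre u = code_centre w"
  show "u = w"
  proof (cases "code_centre u = c0")
    case True
    then have "closed_nbhd V E u \<inter> C = closed_nbhd V E w \<inter> C"
      using eq code_centre_cases[of u] code_centre_cases[of w] closed_nbhd_code_hub u w by auto
    then show ?thesis using code_separates u w by blast
  next
    case False
    then show ?thesis
      using eq code_centre_cases[of u] code_centre_cases[of w] code_centre_neighbour_unique[OF u w]
      by auto
  qed
qed

lemma card_noncentres_le: "card (V - K) \<le> card C"
proof -
  have fin: "finite C" using code_subset finite_vertices finite_subset by blast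
  have "card (V - K - C) \<le> card (C \<inter> K)"
    using card_inj_on_le[OF code_centre_inj] code_centre_mem fin by blast
  moreover have "card (V - K) = card ((V - K) \<inter> C) + card (V - K - C)"
    using finite_vertices by (simp add: card_Int_Diff)
  moreover have "card C = card (C \<inter> K) + card (C - K)" using fin by (simp add: card_Int_Diff)
  moreover have "(V - K) \<inter> C = C - K" using code_subset by blast
  ultimately show ?thesis by simp
qed

end

theorem mainTheorem13:
  fixes V :: "'a set" and E :: "'a set set"
  assumes "appended_3star V E"
    and "max_degree V E = 3"
    and "diameter V E \<le> 6"
  shows "real (gamma_ID V E) = 2 / 3 * real (card V) + 1 / 3"
proof -
  have fin: "finite V" using assms(1) by (rule appended_3star_finite)
  then have "\<forall>w\<in>V. degree V E w \<le> 3" using degree_le_max_degree assms(2) by metis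
  then obtain K where K: "K \<subseteq> V" "K \<noteq> {}" "card V = 3 * card K + 1"
    "\<forall>a b. adj E a b \<longrightarrow> (a \<in> K \<longleftrightarrow> b \<notin> K)" "\<forall>c\<in>K. degree V E c = 3"
    using appended_3star_centres[OF assms(1)] by blast
  interpret centred_tree V E K
    using fin appended_3star_simple appended_3star_every_edge_bridge appended_3star_connected
      assms(1) K by unfold_locales blast+
  obtain c0 where c0: "c0 \<in> K" "\<And>u. joint u \<Longrightarrow> adj E u c0"
    using hub_exists dist_le_diameter[OF fin] assms(3) by (meson order_trans)
  have "gamma_ID V E = card (V - K)"
  proof (rule gamma_ID_eqI)
    show "is_identifying_code V E (V - K)" by (rule identifying_code_noncentres)
  next
    fix C assume "is_identifying_code V E C"
    then interpret hub_code V E K c0 C using c0 by unfold_locales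
    show "card (V - K) \<le> card C" by (rule card_noncentres_le)
  qed
  moreover have "card (V - K) = card V - card K"
    using K(1) fin by (simp add: card_Diff_subset finite_subset)
  ultimately show ?thesis using K(3) by (simp add: field_simps)
qed

end
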